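(* Let $\Omega,\mathcal{L},\mathbb{G}$ be as in the context, assume (A1), (A2) and that $\mathbb{G}$ satisfies (K1). Let $\kappa_0>0$ and let $u\in L^2(\Omega)$ be nonnegative with $u(x_0)\le\kappa_0\int_\Omega u(x)\mathbb{G}(x,x_0)\,dx$ for a.e. $x_0\in\Omega$. Then there exists a constant $\overline{\kappa}>0$ such that $\|u\|_{L^\infty(\Omega)}\le\overline{\kappa}\|u\|_{L^1(\Omega)}$.
   Context: Let $N\ge2$, $\Omega\subset\mathbb{R}^N$ a bounded domain with $C^{1,1}$ boundary. $\mathcal{L}:\mathrm{dom}(\mathcal{L})\subseteq L^1(\Omega)\to L^1(\Omega)$ is densely defined, linear (Dirichlet conditions built in), with (A1) $\mathcal{L}$ is $m$-accretive on $L^1(\Omega)$ and (A2) if $0\le g\le1$ then $0\le e^{-t\mathcal{L}}g\le1$ for all $t>0$. It has a left inverse $\mathcal{L}^{-1}[g](x)=\int_\Omega\mathbb{G}(x,y)g(y)dy$ on $L^1(\Omega)$. (K1): for some $s\in(0,1]$, $c_1>0$, $0\le\mathbb{G}(x,y)\le c_1|x-y|^{-(N-2s)}$ for a.e. $x,y\in\Omega$. *)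

theory Defs
  imports "HOL-Analysis.Analysis"
begin

text \<open>Functions on Omega are represented by real-valued functions on the ambient
  Euclidean space; L^1 classes are handled by working modulo a.e. equality
  with respect to Lebesgue measure restricted to Omega.\<close>

definition L1 :: "'a::euclidean_space set \<Rightarrow> ('a \<Rightarrow> real) set" where
  "L1 \<Omega> = {f. integrable (lebesgue_on \<Omega>) f}"

definition L1norm :: "'a::euclidean_space set \<Rightarrow> ('a \<Rightarrow> real) \<Rightarrow> real" where
  "L1norm \<Omega> f = (\<integral>x. \<bar>f x\<bar> \<partial>lebesgue_on \<Omega>)"

definition ae_eq :: "'a::euclidean_space set \<Rightarrow> ('a \<Rightarrow> real) \<Rightarrow> ('a \<Rightarrow> real) \<Rightarrow> bool" where
  "ae_eq \<Omega> f g \<longleftrightarrow> (AE x in lebesgue_on \<Omega>. f x = g x)"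

definition C11_boundary :: "'a::euclidean_space set \<Rightarrow> bool" where
  "C11_boundary \<Omega> \<longleftrightarrow>
     (\<forall>z\<in>frontier \<Omega>. \<exists>r>0. \<exists>(\<rho>::'a \<Rightarrow> real) (d\<rho>::'a \<Rightarrow> 'a) (K::real).
        (\<forall>x\<in>ball z r. (\<rho> has_derivative (\<lambda>h. d\<rho> x \<bullet> h)) (at x)) \<and>
        (\<forall>x\<in>ball z r. \<forall>y\<in>ball z r. norm (d\<rho> x - d\<rho> y) \<le> K * dist x y) \<and>
        d\<rho> z \<noteq> 0 \<and>
        \<Omega> \<inter> ball z r = {x\<in>ball z r. \<rho> x < 0})"

definition bounded_C11_domain :: "'a::euclidean_space set \<Rightarrow> bool" where
  "bounded_C11_domain \<Omega> \<longleftrightarrow> open \<Omega> \<and> connected \<Omega> \<and> \<Omega> \<noteq> {} \<and> bounded \<Omega> \<and> C11_boundary \<Omega>"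

definition l1_linear_operator ::
  "'a::euclidean_space set \<Rightarrow> ('a \<Rightarrow> real) set \<Rightarrow> (('a \<Rightarrow> real) \<Rightarrow> ('a \<Rightarrow> real)) \<Rightarrow> bool" where
  "l1_linear_operator \<Omega> D L \<longleftrightarrow>
     D \<subseteq> L1 \<Omega> \<and> (\<forall>f\<in>D. L f \<in> L1 \<Omega>) \<and>
     (\<forall>f\<in>D. \<forall>g. ae_eq \<Omega> f g \<longrightarrow> g \<in> D \<and> ae_eq \<Omega> (L f) (L g)) \<and>
     (\<forall>f\<in>D. \<forall>g\<in>D. \<forall>a b::real. (\<lambda>x. a * f x + b * g x) \<in> D \<and>
        ae_eq \<Omega> (L (\<lambda>x. a * f x + b * g x)) (\<lambda>x. a * L f x + b * L g x))"

definition densely_defined ::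
  "'a::euclidean_space set \<Rightarrow> ('a \<Rightarrow> real) set \<Rightarrow> bool" where
  "densely_defined \<Omega> D \<longleftrightarrow>
     (\<forall>f\<in>L1 \<Omega>. \<forall>e>0. \<exists>g\<in>D. L1norm \<Omega> (\<lambda>x. f x - g x) < e)"

definition m_accretive_L1 ::
  "'a::euclidean_space set \<Rightarrow> ('a \<Rightarrow> real) set \<Rightarrow> (('a \<Rightarrow> real) \<Rightarrow> ('a \<Rightarrow> real)) \<Rightarrow> bool" where
  "m_accretive_L1 \<Omega> D L \<longleftrightarrow>
     (\<forall>f\<in>D. \<forall>lam>0. L1norm \<Omega> f \<le> L1norm \<Omega> (\<lambda>x. f x + lam * L f x)) \<and>
     (\<forall>lam>0. \<forall>g\<in>L1 \<Omega>. \<exists>f\<in>D. ae_eq \<Omega> (\<lambda>x. f x + lam * L f x) g)"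

text \<open>Resolvent (I + lambda L)^{-1} (unique up to a.e. equality by accretivity).\<close>
definition resolvent ::
  "'a::euclidean_space set \<Rightarrow> ('a \<Rightarrow> real) set \<Rightarrow> (('a \<Rightarrow> real) \<Rightarrow> ('a \<Rightarrow> real))
     \<Rightarrow> real \<Rightarrow> ('a \<Rightarrow> real) \<Rightarrow> ('a \<Rightarrow> real)" where
  "resolvent \<Omega> D L lam g = (SOME f. f \<in> D \<and> ae_eq \<Omega> (\<lambda>x. f x + lam * L f x) g)"

text \<open>h is (a representative of) e^{-tL} g, defined by the exponential formula
  e^{-tL} g = L^1-lim_n (I + (t/n) L)^{-n} g  (Crandall--Liggett).\<close>
definition semigroup_value ::
  "'a::euclidean_space set \<Rightarrow> ('a \<Rightarrow> real) set \<Rightarrow> (('a \<Rightarrow> real) \<Rightarrow> ('a \<Rightarrow> real))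
     \<Rightarrow> real \<Rightarrow> ('a \<Rightarrow> real) \<Rightarrow> ('a \<Rightarrow> real) \<Rightarrow> bool" where
  "semigroup_value \<Omega> D L t g h \<longleftrightarrow> h \<in> L1 \<Omega> \<and>
     (\<lambda>n. L1norm \<Omega> (\<lambda>x. ((resolvent \<Omega> D L (t / real (Suc n))) ^^ (Suc n)) g x - h x))
       \<longlonglongrightarrow> 0"

definition submarkovian ::
  "'a::euclidean_space set \<Rightarrow> ('a \<Rightarrow> real) set \<Rightarrow> (('a \<Rightarrow> real) \<Rightarrow> ('a \<Rightarrow> real)) \<Rightarrow> bool" where
  "submarkovian \<Omega> D L \<longleftrightarrow>
     (\<forall>g\<in>L1 \<Omega>. (AE x in lebesgue_on \<Omega>. 0 \<le> g x \<and> g x \<le> 1) \<longrightarrow>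
        (\<forall>t>0. \<forall>h. semigroup_value \<Omega> D L t g h \<longrightarrow>
           (AE x in lebesgue_on \<Omega>. 0 \<le> h x \<and> h x \<le> 1)))"

definition green_left_inverse ::
  "'a::euclidean_space set \<Rightarrow> ('a \<Rightarrow> real) set \<Rightarrow> (('a \<Rightarrow> real) \<Rightarrow> ('a \<Rightarrow> real))
     \<Rightarrow> ('a \<Rightarrow> 'a \<Rightarrow> real) \<Rightarrow> bool" where
  "green_left_inverse \<Omega> D L G \<longleftrightarrow>
     (\<lambda>p. G (fst p) (snd p)) \<in> borel_measurable (lebesgue_on (\<Omega> \<times> \<Omega>)) \<and>
     (\<forall>g\<in>L1 \<Omega>. AE x in lebesgue_on \<Omega>. integrable (lebesgue_on \<Omega>) (\<lambda>y. G x y * g y)) \<and>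
     (\<forall>f\<in>D. AE x in lebesgue_on \<Omega>. f x = (\<integral>y. G x y * L f y \<partial>lebesgue_on \<Omega>))"

definition K1 :: "'a::euclidean_space set \<Rightarrow> ('a \<Rightarrow> 'a \<Rightarrow> real) \<Rightarrow> real \<Rightarrow> real \<Rightarrow> bool" where
  "K1 \<Omega> G s c1 \<longleftrightarrow>
     (AE p in lebesgue_on (\<Omega> \<times> \<Omega>). 0 \<le> G (fst p) (snd p) \<and>
        G (fst p) (snd p) \<le> c1 * dist (fst p) (snd p) powr (- (real DIM('a) - 2 * s)))"

end

theory Submission
  imports Defs
begin

text \<open>By (K1) the hypothesis says that \<open>u\<close> is dominated pointwise by its Riesz potential of
  order \<open>a = N - 2s < N\<close>. Substituting the inequality into itself (Tonelli) replaces the kernel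
  by the composition of two Riesz kernels of order \<open>a\<close>, which is bounded by a Riesz kernel of
  order \<open>2a - N\<close> if \<open>2a > N\<close>, and is bounded on a bounded domain if \<open>2a < N\<close>. So every
  substitution doubles the gap \<open>N - a\<close> (after enlarging \<open>a\<close> slightly, at the price of a power
  of the diameter), and after finitely many steps \<open>u\<close> is bounded by a multiple of its
  \<open>L\<^sup>1\<close> norm. The integrals of Riesz kernels over balls and their complements are estimated by
  dyadic decompositions. Only (K1), the boundedness of \<open>\<Omega>\<close> and \<open>u \<in> L\<^sup>2 \<subseteq> L\<^sup>1\<close> are used.\<close>

section \<open>Riesz kernels and their integrals over balls\<close>

text \<open>On the diagonal the kernel is \<open>0\<close> rather than infinite (\<open>0 powr _ = 0\<close>); this is harmless
  because the diagonal is a null set.\<close>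

definition riesz_kernel :: "real \<Rightarrow> 'a::metric_space \<Rightarrow> 'a \<Rightarrow> ennreal" where
  "riesz_kernel a x y = ennreal (dist x y powr - a)"

lemma riesz_kernel_commute: "riesz_kernel a x y = riesz_kernel a y x"
  by (simp add: riesz_kernel_def dist_commute)

lemma measurable_ident_lebesgue_on [measurable]: "(\<lambda>x. x) \<in> borel_measurable (lebesgue_on S)"
  using id_borel_measurable_lebesgue_on by (simp add: id_def)

lemma borel_measurable_riesz_kernel [measurable]:
  fixes f g :: "'b \<Rightarrow> 'a::euclidean_space"
  assumes "f \<in> borel_measurable M" "g \<in> borel_measurable M"
  shows "(\<lambda>x. riesz_kernel a (f x) (g x)) \<in> borel_measurable M"
  unfolding riesz_kernel_def using assms by measurable

lemma sets_borel_cball_ball [measurable]: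
  "cball (c::'a::euclidean_space) r \<in> sets borel" "ball c r \<in> sets borel"
  by auto

lemma ex_dyadic_interval:
  fixes x :: real
  assumes "1 \<le> x"
  obtains k :: nat where "2 ^ k \<le> x" "x < 2 ^ (k + 1)"
proof
  define k where "k = nat \<lfloor>log 2 x\<rfloor>"
  have "\<lfloor>log 2 x\<rfloor> = int k" using assms by (simp add: k_def)
  then have "2 powr real k \<le> x \<and> x < 2 powr (real k + 1)"
    using assms floor_log_eq_powr_iff[of x 2 "int k"] by simp
  then show "2 ^ k \<le> x" "x < 2 ^ (k + 1)"
    by (auto simp: powr_realpow[symmetric] powr_add)
qed

lemma ennreal_le_suminf: "(f::nat \<Rightarrow> ennreal) k \<le> (\<Sum>i. f i)"
  using sum_le_suminf[OF summableI, of "{k}" f] by simp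

lemma riesz_kernel_integral_le_dyadic:
  fixes c :: "'a::euclidean_space" and p A q :: real
  assumes p: "0 \<le> p"
    and cover: "\<And>x. x \<in> S \<Longrightarrow> x \<noteq> c \<Longrightarrow> \<exists>k. \<rho> k / 2 \<le> dist x c \<and> dist x c \<le> \<rho> k"
    and \<rho>: "\<And>k. 0 < \<rho> k"
    and geometric: "\<And>k. \<rho> k powr (DIM('a) - p) = A * q ^ k"
    and q: "0 \<le> q" "q < 1"
  shows "(\<integral>\<^sup>+x. indicator S x * riesz_kernel p x c \<partial>lborel)
    \<le> ennreal (unit_ball_vol DIM('a) * 2 powr p * A / (1 - q))"
proof -
  define V where "V = unit_ball_vol DIM('a)"
  define w where "w k = ennreal ((\<rho> k / 2) powr - p)" for k
  have V: "0 \<le> V" unfolding V_def by (rule unit_ball_vol_nonneg) simp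
  have A: "0 \<le> A" using geometric[of 0] by (metis mult.right_neutral power_0 powr_ge_zero)
  have "indicator S x * riesz_kernel p x c \<le> (\<Sum>k. indicator (cball c (\<rho> k)) x * w k)" for x
  proof (cases "x \<in> S \<and> x \<noteq> c")
    case True
    then obtain k where k: "\<rho> k / 2 \<le> dist x c" "dist x c \<le> \<rho> k" using cover by blast
    have "0 < \<rho> k / 2" using \<rho>[of k] by simp
    with k True p have "indicator S x * riesz_kernel p x c \<le> indicator (cball c (\<rho> k)) x * w k"
      by (auto simp: riesz_kernel_def w_def dist_commute intro!: ennreal_leI powr_mono2')
    also have "\<dots> \<le> (\<Sum>k. indicator (cball c (\<rho> k)) x * w k)"
      by (rule ennreal_le_suminf)
    finally show ?thesis .
  qed (auto simp: riesz_kernel_def)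
  then have "(\<integral>\<^sup>+x. indicator S x * riesz_kernel p x c \<partial>lborel)
      \<le> (\<integral>\<^sup>+x. (\<Sum>k. indicator (cball c (\<rho> k)) x * w k) \<partial>lborel)"
    by (intro nn_integral_mono)
  also have "\<dots> = (\<Sum>k. \<integral>\<^sup>+x. indicator (cball c (\<rho> k)) x * w k \<partial>lborel)"
    by (rule nn_integral_suminf) (auto intro!: borel_measurable_times_ennreal borel_measurable_indicator)
  also have "\<dots> = (\<Sum>k. ennreal (V * 2 powr p * A * q ^ k))"
  proof (rule suminf_cong)
    fix k
    have \<rho>k: "0 < \<rho> k" by (rule \<rho>)
    have "(\<integral>\<^sup>+x. indicator (cball c (\<rho> k)) x * w k \<partial>lborel) = w k * emeasure lborel (cball c (\<rho> k))"
      by (subst mult.commute) (simp add: nn_integral_cmult_indicator)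
    also have "\<dots> = ennreal ((\<rho> k / 2) powr - p * (V * \<rho> k ^ DIM('a)))"
      using \<rho>k by (simp add: w_def emeasure_cball V_def ennreal_mult')
    also have "(\<rho> k / 2) powr - p * (V * \<rho> k ^ DIM('a)) = V * 2 powr p * \<rho> k powr (DIM('a) - p)"
      using \<rho>k by (simp add: powr_divide powr_diff powr_minus_divide powr_realpow field_simps)
    finally show "(\<integral>\<^sup>+x. indicator (cball c (\<rho> k)) x * w k \<partial>lborel) = ennreal (V * 2 powr p * A * q ^ k)"
      by (simp add: geometric mult.assoc)
  qed
  also have "\<dots> = ennreal (\<Sum>k. V * 2 powr p * A * q ^ k)"
    using q V A by (intro suminf_ennreal2) (auto intro!: summable_mult summable_geometric)
  also have "(\<Sum>k. V * 2 powr p * A * q ^ k) = V * 2 powr p * A / (1 - q)"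
    using q by (simp add: suminf_mult suminf_geometric divide_inverse)
  finally show ?thesis unfolding V_def .
qed

lemma riesz_kernel_cball_integral_bound:
  fixes p :: real
  assumes p: "0 \<le> p" "p < DIM('a)"
  obtains K where "0 \<le> K"
    "\<And>(c::'a::euclidean_space) r. 0 < r \<Longrightarrow>
       (\<integral>\<^sup>+x. indicator (cball c r) x * riesz_kernel p x c \<partial>lborel) \<le> ennreal (K * r powr (DIM('a) - p))"
proof
  define q :: real where "q = 2 powr (p - DIM('a))"
  have q: "0 \<le> q" "q < 1" using p by (auto simp: q_def powr_less_one)
  define K where "K = unit_ball_vol DIM('a) * 2 powr p / (1 - q)"
  show "0 \<le> K" using q by (simp add: K_def)
  fix c :: 'a and r :: real
  assume r: "0 < r"
  have "(\<integral>\<^sup>+x. indicator (cball c r) x * riesz_kernel p x c \<partial>lborel)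
    \<le> ennreal (unit_ball_vol DIM('a) * 2 powr p * r powr (DIM('a) - p) / (1 - q))"
  proof (rule riesz_kernel_integral_le_dyadic[where \<rho> = "\<lambda>k. r / 2 ^ k"])
    fix x assume x: "x \<in> cball c r" "x \<noteq> c"
    then have "1 \<le> r / dist x c" by (auto simp: dist_commute)
    then obtain k where "2 ^ k \<le> r / dist x c" "r / dist x c < 2 ^ (k + 1)"
      by (rule ex_dyadic_interval)
    then show "\<exists>k. r / 2 ^ k / 2 \<le> dist x c \<and> dist x c \<le> r / 2 ^ k"
      using x by (auto simp: field_simps intro!: exI[of _ k])
  next
    show "(r / 2 ^ k) powr (DIM('a) - p) = r powr (DIM('a) - p) * q ^ k" for k
      using r by (simp add: q_def powr_divide powr_realpow[symmetric] powr_powr powr_minus_divide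
          powr_diff field_simps)
  qed (use p r q in auto)
  then show "(\<integral>\<^sup>+x. indicator (cball c r) x * riesz_kernel p x c \<partial>lborel) \<le> ennreal (K * r powr (DIM('a) - p))"
    by (simp add: K_def mult_ac)
qed

lemma riesz_kernel_outside_ball_integral_bound:
  fixes p :: real
  assumes p: "DIM('a) < p"
  obtains K where "0 \<le> K"
    "\<And>(c::'a::euclidean_space) r. 0 < r \<Longrightarrow>
       (\<integral>\<^sup>+x. indicator (- ball c r) x * riesz_kernel p x c \<partial>lborel) \<le> ennreal (K * r powr (DIM('a) - p))"
proof
  define q :: real where "q = 2 powr (DIM('a) - p)"
  have q: "0 \<le> q" "q < 1" using p by (auto simp: q_def powr_less_one)
  define K where "K = unit_ball_vol DIM('a) * 2 powr p * 2 powr (DIM('a) - p) / (1 - q)"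
  show "0 \<le> K" using q by (simp add: K_def)
  fix c :: 'a and r :: real
  assume r: "0 < r"
  have "(\<integral>\<^sup>+x. indicator (- ball c r) x * riesz_kernel p x c \<partial>lborel)
    \<le> ennreal (unit_ball_vol DIM('a) * 2 powr p * ((2 * r) powr (DIM('a) - p)) / (1 - q))"
  proof (rule riesz_kernel_integral_le_dyadic[where \<rho> = "\<lambda>k. 2 * r * 2 ^ k"])
    fix x assume x: "x \<in> - ball c r"
    then have "1 \<le> dist x c / r" using r by (auto simp: dist_commute)
    then obtain k where "2 ^ k \<le> dist x c / r" "dist x c / r < 2 ^ (k + 1)"
      by (rule ex_dyadic_interval)
    then show "\<exists>k. 2 * r * 2 ^ k / 2 \<le> dist x c \<and> dist x c \<le> 2 * r * 2 ^ k"
      using r by (auto simp: field_simps intro!: exI[of _ k])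
  next
    show "(2 * r * 2 ^ k) powr (DIM('a) - p) = (2 * r) powr (DIM('a) - p) * q ^ k" for k
      using r by (simp add: q_def powr_mult powr_realpow[symmetric] powr_powr mult.commute)
  qed (use p r q in auto)
  then show "(\<integral>\<^sup>+x. indicator (- ball c r) x * riesz_kernel p x c \<partial>lborel) \<le> ennreal (K * r powr (DIM('a) - p))"
    using r by (simp add: K_def powr_mult mult_ac)
qed

section \<open>Composition of two Riesz kernels\<close>

lemma riesz_kernel_product_le:
  fixes x x0 y :: "'a::metric_space" and a h :: real
  assumes a: "0 \<le> a" and h: "dist y x0 = 2 * h" "0 < h"
  shows "riesz_kernel a y x * riesz_kernel a x x0
    \<le> ennreal (h powr - a) * (indicator (cball x0 h) x * riesz_kernel a x x0)
      + ennreal (h powr - a) * (indicator (cball y h) x * riesz_kernel a x y)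
      + ennreal (3 powr a) * (indicator (- ball x0 h) x * riesz_kernel (2 * a) x x0)"
    (is "_ \<le> ?near_x0 + ?near_y + ?far")
proof -
  have tri: "2 * h \<le> dist x y + dist x x0" "dist x x0 \<le> dist x y + 2 * h"
    using dist_triangle[of y x0 x] dist_triangle[of x x0 y] h by (auto simp: dist_commute)
  consider (near_x0) "dist x x0 \<le> h" | (near_y) "dist x y \<le> h" | (far) "h < dist x x0" "h < dist x y"
    by linarith
  then show ?thesis
  proof cases
    case near_x0
    then have "riesz_kernel a y x \<le> ennreal (h powr - a)"
      using tri a h unfolding riesz_kernel_def by (intro ennreal_leI powr_mono2') (auto simp: dist_commute)
    then have "riesz_kernel a y x * riesz_kernel a x x0 \<le> ?near_x0"
      using near_x0 by (auto simp: dist_commute intro: mult_right_mono)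
    then show ?thesis by (auto intro: order_trans add_increasing2)
  next
    case near_y
    then have "riesz_kernel a x x0 \<le> ennreal (h powr - a)"
      using tri a h unfolding riesz_kernel_def by (intro ennreal_leI powr_mono2') auto
    then have "riesz_kernel a y x * riesz_kernel a x x0 \<le> riesz_kernel a x y * ennreal (h powr - a)"
      by (simp add: riesz_kernel_commute[of a y x] mult_left_mono)
    also have "\<dots> = ?near_y"
      using near_y by (simp add: dist_commute mult.commute)
    finally have "riesz_kernel a y x * riesz_kernel a x x0 \<le> ?near_y" .
    then show ?thesis by (auto intro: order_trans add_increasing2 add_increasing)
  next
    case far
    then have "dist x x0 / 3 \<le> dist y x" using tri by (simp add: dist_commute)
    then have "dist y x powr - a \<le> (dist x x0 / 3) powr - a"
      using far h a by (intro powr_mono2') auto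
    also have "\<dots> = 3 powr a * dist x x0 powr - a"
      by (simp add: powr_divide powr_minus_divide)
    finally have "dist y x powr - a * dist x x0 powr - a \<le> 3 powr a * dist x x0 powr - a * dist x x0 powr - a"
      by (rule mult_right_mono) simp
    also have "\<dots> = 3 powr a * dist x x0 powr - (2 * a)"
      by (simp add: mult.assoc powr_add[symmetric])
    finally have "dist y x powr - a * dist x x0 powr - a \<le> 3 powr a * dist x x0 powr - (2 * a)" .
    moreover have "x \<in> - ball x0 h" using far by (simp add: dist_commute)
    ultimately have "riesz_kernel a y x * riesz_kernel a x x0 \<le> ?far"
      by (simp add: riesz_kernel_def ennreal_mult'[symmetric] ennreal_leI)
    then show ?thesis by (auto intro: order_trans add_increasing)
  qed
qed

lemma nn_integral_riesz_kernel_product_le: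
  fixes x0 y :: "'a::euclidean_space" and a h :: real
  assumes "0 \<le> a" "dist y x0 = 2 * h" "0 < h"
  shows "(\<integral>\<^sup>+x. riesz_kernel a y x * riesz_kernel a x x0 \<partial>lborel)
    \<le> ennreal (h powr - a) * (\<integral>\<^sup>+x. indicator (cball x0 h) x * riesz_kernel a x x0 \<partial>lborel)
      + ennreal (h powr - a) * (\<integral>\<^sup>+x. indicator (cball y h) x * riesz_kernel a x y \<partial>lborel)
      + ennreal (3 powr a) * (\<integral>\<^sup>+x. indicator (- ball x0 h) x * riesz_kernel (2 * a) x x0 \<partial>lborel)"
proof -
  have "(\<integral>\<^sup>+x. riesz_kernel a y x * riesz_kernel a x x0 \<partial>lborel)
    \<le> (\<integral>\<^sup>+x. ennreal (h powr - a) * (indicator (cball x0 h) x * riesz_kernel a x x0)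
        + ennreal (h powr - a) * (indicator (cball y h) x * riesz_kernel a x y)
        + ennreal (3 powr a) * (indicator (- ball x0 h) x * riesz_kernel (2 * a) x x0) \<partial>lborel)"
    using assms by (intro nn_integral_mono riesz_kernel_product_le)
  then show ?thesis
    by (simp add: nn_integral_add nn_integral_cmult)
qed

lemma riesz_kernel_composition_le_kernel:
  fixes a :: real
  assumes a: "DIM('a) < 2 * a" "a < DIM('a)"
  obtains K where "0 \<le> K"
    "\<And>x0 y :: 'a::euclidean_space. y \<noteq> x0 \<Longrightarrow>
       (\<integral>\<^sup>+x. riesz_kernel a y x * riesz_kernel a x x0 \<partial>lborel) \<le> ennreal K * riesz_kernel (2 * a - DIM('a)) y x0"
proof -
  have "0 \<le> a" using a by simp
  obtain K1 where K1: "0 \<le> K1" "\<And>(c::'a) r. 0 < r \<Longrightarrow>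
      (\<integral>\<^sup>+x. indicator (cball c r) x * riesz_kernel a x c \<partial>lborel) \<le> ennreal (K1 * r powr (DIM('a) - a))"
    using riesz_kernel_cball_integral_bound[OF \<open>0 \<le> a\<close> a(2)] by blast
  obtain K2 where K2: "0 \<le> K2" "\<And>(c::'a) r. 0 < r \<Longrightarrow>
      (\<integral>\<^sup>+x. indicator (- ball c r) x * riesz_kernel (2 * a) x c \<partial>lborel) \<le> ennreal (K2 * r powr (DIM('a) - 2 * a))"
    using riesz_kernel_outside_ball_integral_bound[OF a(1)] by blast
  define K where "K = (2 * K1 + 3 powr a * K2) * 2 powr (2 * a - DIM('a))"
  show thesis
  proof (rule that)
    show "0 \<le> K" using K1 K2 by (simp add: K_def)
    fix x0 y :: 'a
    assume "y \<noteq> x0"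
    define h where "h = dist y x0 / 2"
    have h: "dist y x0 = 2 * h" "0 < h" using \<open>y \<noteq> x0\<close> by (auto simp: h_def)
    define X where "X = h powr - a * (K1 * h powr (DIM('a) - a))"
    define Y where "Y = 3 powr a * (K2 * h powr (DIM('a) - 2 * a))"
    have XY: "0 \<le> X" "0 \<le> Y" using K1 K2 by (simp_all add: X_def Y_def)
    have split: "X + X + Y = K * dist y x0 powr (DIM('a) - 2 * a)"
    proof -
      have "h powr - a * h powr (DIM('a) - a) = h powr (DIM('a) - 2 * a)"
        by (simp add: powr_add[symmetric])
      moreover have "h powr (DIM('a) - 2 * a) = 2 powr (2 * a - DIM('a)) * dist y x0 powr (DIM('a) - 2 * a)"
        using h by (simp add: powr_mult mult.assoc powr_add[symmetric])
      ultimately show ?thesis by (simp add: X_def Y_def K_def algebra_simps)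
    qed
    have "(\<integral>\<^sup>+x. riesz_kernel a y x * riesz_kernel a x x0 \<partial>lborel)
      \<le> ennreal (h powr - a) * ennreal (K1 * h powr (DIM('a) - a))
        + ennreal (h powr - a) * ennreal (K1 * h powr (DIM('a) - a))
        + ennreal (3 powr a) * ennreal (K2 * h powr (DIM('a) - 2 * a))"
      using nn_integral_riesz_kernel_product_le[OF \<open>0 \<le> a\<close> h] h(2)
      by (elim order_trans) (intro add_mono mult_left_mono K1 K2; simp)
    also have "\<dots> = ennreal X + ennreal X + ennreal Y"
      by (simp add: X_def Y_def ennreal_mult')
    also have "\<dots> = ennreal (K * dist y x0 powr (DIM('a) - 2 * a))"
      using XY by (simp only: split[symmetric] ennreal_plus add_nonneg_nonneg)
    also have "\<dots> = ennreal K * riesz_kernel (2 * a - DIM('a)) y x0"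
      using \<open>0 \<le> K\<close> by (simp add: riesz_kernel_def ennreal_mult')
    finally show "(\<integral>\<^sup>+x. riesz_kernel a y x * riesz_kernel a x x0 \<partial>lborel)
      \<le> ennreal K * riesz_kernel (2 * a - DIM('a)) y x0" .
  qed
qed

lemma riesz_kernel_mult_le:
  fixes a :: real
  shows "riesz_kernel a x y * riesz_kernel a z w \<le> riesz_kernel (2 * a) x y + riesz_kernel (2 * a) z w"
proof -
  have am_gm: "u * v \<le> u * u + v * v" if "0 \<le> u" "0 \<le> v" for u v :: real
    using that sum_squares_bound[of u v] mult_nonneg_nonneg[OF that] unfolding power2_eq_square by linarith
  have "dist x y powr - a * dist z w powr - a
    \<le> dist x y powr - a * dist x y powr - a + dist z w powr - a * dist z w powr - a"
    by (rule am_gm) simp_all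
  also have "\<dots> = dist x y powr - (2 * a) + dist z w powr - (2 * a)"
    by (simp add: powr_add[symmetric])
  finally have "ennreal (dist x y powr - a * dist z w powr - a)
      \<le> ennreal (dist x y powr - (2 * a) + dist z w powr - (2 * a))"
    by (rule ennreal_leI)
  then show ?thesis
    by (simp add: riesz_kernel_def ennreal_mult')
qed

lemma riesz_kernel_composition_bounded:
  fixes a D :: real
  assumes a: "0 \<le> a" "2 * a < DIM('a)" and D: "0 < D"
  obtains K where "0 \<le> K"
    "\<And>x0 y :: 'a::euclidean_space. dist y x0 \<le> D \<Longrightarrow>
       (\<integral>\<^sup>+x. indicator (cball x0 D) x * (riesz_kernel a y x * riesz_kernel a x x0) \<partial>lborel) \<le> ennreal K"
proof -
  have "0 \<le> 2 * a" using a by simp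
  obtain K0 where K0: "0 \<le> K0" "\<And>(c::'a) r. 0 < r \<Longrightarrow>
      (\<integral>\<^sup>+x. indicator (cball c r) x * riesz_kernel (2 * a) x c \<partial>lborel) \<le> ennreal (K0 * r powr (DIM('a) - 2 * a))"
    using riesz_kernel_cball_integral_bound[OF \<open>0 \<le> 2 * a\<close> a(2)] by blast
  show thesis
  proof (rule that)
    show "0 \<le> K0 * (2 * D) powr (DIM('a) - 2 * a) + K0 * D powr (DIM('a) - 2 * a)" using K0 by simp
    fix x0 y :: 'a
    assume y: "dist y x0 \<le> D"
    have "indicator (cball x0 D) x * (riesz_kernel a y x * riesz_kernel a x x0)
      \<le> indicator (cball y (2 * D)) x * riesz_kernel (2 * a) x y + indicator (cball x0 D) x * riesz_kernel (2 * a) x x0"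
      for x
    proof (cases "x \<in> cball x0 D")
      case True
      then have "x \<in> cball y (2 * D)" using y dist_triangle[of y x x0] by (simp add: dist_commute)
      with True show ?thesis
        using riesz_kernel_mult_le[of a y x x x0] by (simp add: riesz_kernel_commute[of _ y x])
    qed simp
    then have "(\<integral>\<^sup>+x. indicator (cball x0 D) x * (riesz_kernel a y x * riesz_kernel a x x0) \<partial>lborel)
      \<le> (\<integral>\<^sup>+x. indicator (cball y (2 * D)) x * riesz_kernel (2 * a) x y
           + indicator (cball x0 D) x * riesz_kernel (2 * a) x x0 \<partial>lborel)"
      by (rule nn_integral_mono)
    also have "\<dots> = (\<integral>\<^sup>+x. indicator (cball y (2 * D)) x * riesz_kernel (2 * a) x y \<partial>lborel)
        + (\<integral>\<^sup>+x. indicator (cball x0 D) x * riesz_kernel (2 * a) x x0 \<partial>lborel)"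
      by (rule nn_integral_add) (auto intro!: borel_measurable_times_ennreal borel_measurable_indicator borel_measurable_riesz_kernel)
    also have "\<dots> \<le> ennreal (K0 * (2 * D) powr (DIM('a) - 2 * a)) + ennreal (K0 * D powr (DIM('a) - 2 * a))"
      using D by (intro add_mono K0) auto
    also have "\<dots> = ennreal (K0 * (2 * D) powr (DIM('a) - 2 * a) + K0 * D powr (DIM('a) - 2 * a))"
      using K0 by (simp add: ennreal_plus)
    finally show "(\<integral>\<^sup>+x. indicator (cball x0 D) x * (riesz_kernel a y x * riesz_kernel a x x0) \<partial>lborel)
      \<le> ennreal (K0 * (2 * D) powr (DIM('a) - 2 * a) + K0 * D powr (DIM('a) - 2 * a))" .
  qed
qed

section \<open>Functions dominated by their Riesz potential\<close>

definition riesz_dominated :: "'a::euclidean_space set \<Rightarrow> real \<Rightarrow> ('a \<Rightarrow> ennreal) \<Rightarrow> bool" where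
  "riesz_dominated \<Omega> a f \<longleftrightarrow> (\<exists>C\<ge>0. AE x0 in lebesgue_on \<Omega>.
     f x0 \<le> ennreal C * (\<integral>\<^sup>+x. f x * riesz_kernel a x x0 \<partial>lebesgue_on \<Omega>))"

lemma nn_integral_lebesgue_on_le_lborel:
  assumes "S \<in> sets lebesgue"
  shows "(\<integral>\<^sup>+x. f x \<partial>lebesgue_on S) \<le> (\<integral>\<^sup>+x. f x \<partial>lborel)"
proof -
  have "(\<integral>\<^sup>+x. f x \<partial>lebesgue_on S) = (\<integral>\<^sup>+x. f x * indicator S x \<partial>lebesgue)"
    using assms by (simp add: nn_integral_restrict_space)
  also have "\<dots> \<le> (\<integral>\<^sup>+x. f x \<partial>lebesgue)"
    by (intro nn_integral_mono) (simp add: indicator_def)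
  finally show ?thesis by (simp add: nn_integral_completion)
qed

lemma AE_lebesgue_on_if_AE_lborel:
  assumes "S \<in> sets lebesgue" "AE x in lborel. x \<in> S \<longrightarrow> P x"
  shows "AE x in lebesgue_on S. P x"
  using AE_completion[OF assms(2)] assms(1) by (simp add: AE_restrict_space_iff)

lemma AE_lebesgue_on_neq:
  assumes "S \<in> sets lebesgue"
  shows "AE x in lebesgue_on S. x \<noteq> (c::'a::euclidean_space)"
  using AE_lborel_singleton[of c] by (intro AE_lebesgue_on_if_AE_lborel assms) (auto elim: eventually_mono)

lemma riesz_potential_bound_iterate:
  fixes \<Omega> :: "'a::euclidean_space set" and f :: "'a \<Rightarrow> ennreal"
  assumes \<Omega>: "bounded \<Omega>" "\<Omega> \<in> sets lebesgue" and f: "f \<in> borel_measurable (lebesgue_on \<Omega>)"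
    and dom: "AE x0 in lebesgue_on \<Omega>. f x0 \<le> ennreal C * (\<integral>\<^sup>+x. f x * riesz_kernel a x x0 \<partial>lebesgue_on \<Omega>)"
  shows "AE x0 in lebesgue_on \<Omega>. f x0 \<le> ennreal C * ennreal C *
    (\<integral>\<^sup>+y. f y * (\<integral>\<^sup>+x. riesz_kernel a y x * riesz_kernel a x x0 \<partial>lebesgue_on \<Omega>) \<partial>lebesgue_on \<Omega>)"
  using dom
proof eventually_elim
  case (elim x0)
  let ?M = "lebesgue_on \<Omega>"
  interpret finite_measure ?M
    using \<Omega> by (intro finite_measure_lebesgue_on bounded_set_imp_lmeasurable)
  interpret pair_sigma_finite ?M ?M ..
  note [measurable] = f
  have "(\<integral>\<^sup>+x. f x * riesz_kernel a x x0 \<partial>?M)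
      \<le> (\<integral>\<^sup>+x. (ennreal C * (\<integral>\<^sup>+y. f y * riesz_kernel a y x \<partial>?M)) * riesz_kernel a x x0 \<partial>?M)"
    using dom by (intro nn_integral_mono_AE) (auto elim!: eventually_mono intro: mult_right_mono)
  also have "\<dots> = ennreal C * (\<integral>\<^sup>+x. \<integral>\<^sup>+y. f y * riesz_kernel a y x * riesz_kernel a x x0 \<partial>?M \<partial>?M)"
  proof -
    have "(\<integral>\<^sup>+y. f y * riesz_kernel a y x \<partial>?M) * riesz_kernel a x x0
        = (\<integral>\<^sup>+y. f y * riesz_kernel a y x * riesz_kernel a x x0 \<partial>?M)" for x
      by (rule nn_integral_multc[symmetric]) measurable
    then show ?thesis
      by (simp add: mult.assoc nn_integral_cmult)
  qed
  also have "(\<integral>\<^sup>+x. \<integral>\<^sup>+y. f y * riesz_kernel a y x * riesz_kernel a x x0 \<partial>?M \<partial>?M)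
      = (\<integral>\<^sup>+y. \<integral>\<^sup>+x. f y * riesz_kernel a y x * riesz_kernel a x x0 \<partial>?M \<partial>?M)"
    by (rule Fubini') measurable
  also have "\<dots> = (\<integral>\<^sup>+y. f y * (\<integral>\<^sup>+x. riesz_kernel a y x * riesz_kernel a x x0 \<partial>?M) \<partial>?M)"
    by (simp add: nn_integral_cmult mult.assoc)
  finally have "ennreal C * (\<integral>\<^sup>+x. f x * riesz_kernel a x x0 \<partial>?M) \<le> ennreal C * (ennreal C *
      (\<integral>\<^sup>+y. f y * (\<integral>\<^sup>+x. riesz_kernel a y x * riesz_kernel a x x0 \<partial>?M) \<partial>?M))"
    by (rule mult_left_mono) simp
  with elim show ?case by (simp add: mult.assoc)
qed

lemma riesz_dominated_imp_composed_bound: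
  fixes \<Omega> :: "'a::euclidean_space set" and f :: "'a \<Rightarrow> ennreal" and g :: "'a \<Rightarrow> 'a \<Rightarrow> ennreal"
  assumes \<Omega>: "bounded \<Omega>" "\<Omega> \<in> sets lebesgue" and f: "f \<in> borel_measurable (lebesgue_on \<Omega>)"
    and g: "\<And>x0. (\<lambda>y. g y x0) \<in> borel_measurable (lebesgue_on \<Omega>)"
    and "riesz_dominated \<Omega> a f" and K: "0 \<le> K"
    and composed: "\<And>x0 y. x0 \<in> \<Omega> \<Longrightarrow> y \<in> \<Omega> \<Longrightarrow> y \<noteq> x0 \<Longrightarrow>
      (\<integral>\<^sup>+x. riesz_kernel a y x * riesz_kernel a x x0 \<partial>lebesgue_on \<Omega>) \<le> ennreal K * g y x0"
  shows "\<exists>C\<ge>0. AE x0 in lebesgue_on \<Omega>. f x0 \<le> ennreal C * (\<integral>\<^sup>+y. f y * g y x0 \<partial>lebesgue_on \<Omega>)"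
proof -
  let ?M = "lebesgue_on \<Omega>"
  obtain C where C: "0 \<le> C"
    and dom: "AE x0 in ?M. f x0 \<le> ennreal C * (\<integral>\<^sup>+x. f x * riesz_kernel a x x0 \<partial>?M)"
    using \<open>riesz_dominated \<Omega> a f\<close> unfolding riesz_dominated_def by blast
  have in_\<Omega>: "AE x in ?M. x \<in> \<Omega>" by (rule AE_I2) simp
  note [measurable] = f g
  show ?thesis
  proof (intro exI conjI)
    show "0 \<le> C * C * K" using C K by simp
    show "AE x0 in ?M. f x0 \<le> ennreal (C * C * K) * (\<integral>\<^sup>+y. f y * g y x0 \<partial>?M)"
      using riesz_potential_bound_iterate[OF \<Omega> f dom] in_\<Omega>
    proof eventually_elim
      case (elim x0)
      note x0 = elim
      have "AE y in ?M. f y * (\<integral>\<^sup>+x. riesz_kernel a y x * riesz_kernel a x x0 \<partial>?M) \<le> ennreal K * (f y * g y x0)"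
        using AE_lebesgue_on_neq[OF \<Omega>(2), of x0] in_\<Omega>
      proof eventually_elim
        case (elim y)
        have "f y * (\<integral>\<^sup>+x. riesz_kernel a y x * riesz_kernel a x x0 \<partial>?M) \<le> f y * (ennreal K * g y x0)"
          using composed[OF x0(2) elim(2,1)] by (rule mult_left_mono) simp
        then show ?case by (simp add: mult.left_commute)
      qed
      then have "(\<integral>\<^sup>+y. f y * (\<integral>\<^sup>+x. riesz_kernel a y x * riesz_kernel a x x0 \<partial>?M) \<partial>?M)
          \<le> ennreal K * (\<integral>\<^sup>+y. f y * g y x0 \<partial>?M)"
        by (subst nn_integral_cmult[symmetric]) (auto intro: nn_integral_mono_AE)
      then have "ennreal C * ennreal C * (\<integral>\<^sup>+y. f y * (\<integral>\<^sup>+x. riesz_kernel a y x * riesz_kernel a x x0 \<partial>?M) \<partial>?M)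
          \<le> ennreal C * ennreal C * (ennreal K * (\<integral>\<^sup>+y. f y * g y x0 \<partial>?M))"
        by (rule mult_left_mono) simp
      with x0 C K show ?case by (simp add: ennreal_mult mult.assoc)
    qed
  qed
qed

lemma riesz_dominated_double_gap:
  fixes \<Omega> :: "'a::euclidean_space set" and a :: real
  assumes \<Omega>: "bounded \<Omega>" "\<Omega> \<in> sets lebesgue" and f: "f \<in> borel_measurable (lebesgue_on \<Omega>)"
    and a: "DIM('a) < 2 * a" "a < DIM('a)" and "riesz_dominated \<Omega> a f"
  shows "riesz_dominated \<Omega> (2 * a - DIM('a)) f"
proof -
  obtain K where K: "0 \<le> K" "\<And>x0 y :: 'a. y \<noteq> x0 \<Longrightarrow>
      (\<integral>\<^sup>+x. riesz_kernel a y x * riesz_kernel a x x0 \<partial>lborel) \<le> ennreal K * riesz_kernel (2 * a - DIM('a)) y x0"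
    using riesz_kernel_composition_le_kernel[OF a] by blast
  show ?thesis
    unfolding riesz_dominated_def
  proof (rule riesz_dominated_imp_composed_bound[OF \<Omega> f _ \<open>riesz_dominated \<Omega> a f\<close> K(1)])
    show "(\<lambda>y. riesz_kernel (2 * a - DIM('a)) y x0) \<in> borel_measurable (lebesgue_on \<Omega>)" for x0
      by measurable
    show "(\<integral>\<^sup>+x. riesz_kernel a y x * riesz_kernel a x x0 \<partial>lebesgue_on \<Omega>)
      \<le> ennreal K * riesz_kernel (2 * a - DIM('a)) y x0" if "y \<noteq> x0" for x0 y
      using nn_integral_lebesgue_on_le_lborel[OF \<Omega>(2)] K(2)[OF that] by (rule order_trans)
  qed
qed

lemma riesz_dominated_imp_L1_bound_small_exponent:
  fixes \<Omega> :: "'a::euclidean_space set" and a :: real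
  assumes \<Omega>: "bounded \<Omega>" "\<Omega> \<in> sets lebesgue" and f: "f \<in> borel_measurable (lebesgue_on \<Omega>)"
    and a: "0 \<le> a" "2 * a < DIM('a)" and "riesz_dominated \<Omega> a f"
  shows "\<exists>C\<ge>0. AE x0 in lebesgue_on \<Omega>. f x0 \<le> ennreal C * (\<integral>\<^sup>+x. f x \<partial>lebesgue_on \<Omega>)"
proof -
  define D where "D = diameter \<Omega> + 1"
  have D: "0 < D" "\<And>x y. x \<in> \<Omega> \<Longrightarrow> y \<in> \<Omega> \<Longrightarrow> dist x y \<le> D"
    using diameter_bounded_bound[OF \<Omega>(1)] diameter_ge_0[OF \<Omega>(1)] by (fastforce simp: D_def)+
  obtain K where K: "0 \<le> K" "\<And>x0 y :: 'a. dist y x0 \<le> D \<Longrightarrow>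
      (\<integral>\<^sup>+x. indicator (cball x0 D) x * (riesz_kernel a y x * riesz_kernel a x x0) \<partial>lborel) \<le> ennreal K"
    using riesz_kernel_composition_bounded[OF a D(1)] by blast
  have "\<exists>C\<ge>0. AE x0 in lebesgue_on \<Omega>. f x0 \<le> ennreal C * (\<integral>\<^sup>+y. f y * 1 \<partial>lebesgue_on \<Omega>)"
  proof (rule riesz_dominated_imp_composed_bound[OF \<Omega> f _ \<open>riesz_dominated \<Omega> a f\<close> K(1)])
    fix x0 y assume xy: "x0 \<in> \<Omega>" "y \<in> \<Omega>"
    have "(\<integral>\<^sup>+x. riesz_kernel a y x * riesz_kernel a x x0 \<partial>lebesgue_on \<Omega>)
        = (\<integral>\<^sup>+x. indicator (cball x0 D) x * (riesz_kernel a y x * riesz_kernel a x x0) \<partial>lebesgue_on \<Omega>)"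
      using xy D by (intro nn_integral_cong) (simp add: indicator_def)
    also have "\<dots> \<le> ennreal K"
      by (rule order_trans[OF nn_integral_lebesgue_on_le_lborel[OF \<Omega>(2)] K(2)[OF D(2)[OF xy(2,1)]]])
    finally show "(\<integral>\<^sup>+x. riesz_kernel a y x * riesz_kernel a x x0 \<partial>lebesgue_on \<Omega>) \<le> ennreal K * 1"
      by simp
  qed simp
  then show ?thesis by simp
qed

lemma riesz_kernel_le_larger_exponent:
  fixes a b D :: real
  assumes "a \<le> b" "dist x y \<le> D"
  shows "riesz_kernel a x y \<le> ennreal (D powr (b - a)) * riesz_kernel b x y"
proof (cases "x = y")
  case False
  then have "dist x y powr - a = dist x y powr (b - a) * dist x y powr - b"
    by (simp add: powr_add[symmetric])
  also have "\<dots> \<le> D powr (b - a) * dist x y powr - b"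
    using assms False by (intro mult_right_mono powr_mono2) auto
  finally show ?thesis
    by (simp add: riesz_kernel_def ennreal_mult'[symmetric] ennreal_leI)
qed (simp add: riesz_kernel_def)

lemma riesz_dominated_larger_exponent:
  fixes \<Omega> :: "'a::euclidean_space set" and a b :: real
  assumes \<Omega>: "bounded \<Omega>" and f: "f \<in> borel_measurable (lebesgue_on \<Omega>)"
    and "a \<le> b" and "riesz_dominated \<Omega> a f"
  shows "riesz_dominated \<Omega> b f"
proof -
  let ?M = "lebesgue_on \<Omega>"
  define D where "D = diameter \<Omega>"
  have D: "0 \<le> D" "\<And>x y. x \<in> \<Omega> \<Longrightarrow> y \<in> \<Omega> \<Longrightarrow> dist x y \<le> D"
    using diameter_bounded_bound[OF \<Omega>] diameter_ge_0[OF \<Omega>] by (auto simp: D_def)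
  obtain C where C: "0 \<le> C"
    and dom: "AE x0 in ?M. f x0 \<le> ennreal C * (\<integral>\<^sup>+x. f x * riesz_kernel a x x0 \<partial>?M)"
    using \<open>riesz_dominated \<Omega> a f\<close> unfolding riesz_dominated_def by blast
  have in_\<Omega>: "AE x in ?M. x \<in> \<Omega>" by (rule AE_I2) simp
  note [measurable] = f
  show ?thesis
    unfolding riesz_dominated_def
  proof (intro exI conjI)
    show "0 \<le> C * D powr (b - a)" using C by simp
    show "AE x0 in ?M. f x0 \<le> ennreal (C * D powr (b - a)) * (\<integral>\<^sup>+x. f x * riesz_kernel b x x0 \<partial>?M)"
      using dom in_\<Omega>
    proof eventually_elim
      case (elim x0)
      have "(\<integral>\<^sup>+x. f x * riesz_kernel a x x0 \<partial>?M)
          \<le> (\<integral>\<^sup>+x. ennreal (D powr (b - a)) * (f x * riesz_kernel b x x0) \<partial>?M)"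
        using riesz_kernel_le_larger_exponent[OF \<open>a \<le> b\<close> D(2)] elim(2)
        by (intro nn_integral_mono) (simp add: mult.left_commute mult_left_mono)
      also have "\<dots> = ennreal (D powr (b - a)) * (\<integral>\<^sup>+x. f x * riesz_kernel b x x0 \<partial>?M)"
        by (rule nn_integral_cmult) measurable
      finally have "ennreal C * (\<integral>\<^sup>+x. f x * riesz_kernel a x x0 \<partial>?M)
          \<le> ennreal C * (ennreal (D powr (b - a)) * (\<integral>\<^sup>+x. f x * riesz_kernel b x x0 \<partial>?M))"
        by (rule mult_left_mono) simp
      with elim C show ?case by (simp add: ennreal_mult mult.assoc)
    qed
  qed
qed

lemma riesz_dominated_imp_L1_bound_after_doublings:
  fixes \<Omega> :: "'a::euclidean_space set" and a :: real
  assumes \<Omega>: "bounded \<Omega>" "\<Omega> \<in> sets lebesgue" and f: "f \<in> borel_measurable (lebesgue_on \<Omega>)"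
    and "riesz_dominated \<Omega> a f" "0 \<le> a" "a < DIM('a) - DIM('a) / 2 ^ (n + 1)"
  shows "\<exists>C\<ge>0. AE x0 in lebesgue_on \<Omega>. f x0 \<le> ennreal C * (\<integral>\<^sup>+x. f x \<partial>lebesgue_on \<Omega>)"
  using assms(4-)
proof (induction n arbitrary: a)
  case 0
  then show ?case
    using riesz_dominated_imp_L1_bound_small_exponent[OF \<Omega> f] by simp
next
  case (Suc n)
  define N where "N = real DIM('a)"
  show ?case
  proof (cases "2 * a < N")
    case True
    then show ?thesis
      using riesz_dominated_imp_L1_bound_small_exponent[OF \<Omega> f] Suc.prems by (simp add: N_def)
  next
    case False
    txt \<open>Passing to \<open>b > a\<close> avoids the critical case \<open>2a = N\<close>, where the composed kernel is
      only logarithmically bounded.\<close>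
    obtain b where b: "a < b" "b < N - N / 2 ^ (n + 2)"
      using Suc.prems(3) dense by (auto simp: N_def)
    have "N < 2 * b" "b < N"
      using False b by (auto simp: N_def intro: order.strict_trans2)
    moreover have "riesz_dominated \<Omega> b f"
      using b(1) by (rule riesz_dominated_larger_exponent[OF \<Omega>(1) f less_imp_le Suc.prems(1)])
    ultimately have "riesz_dominated \<Omega> (2 * b - N) f"
      unfolding N_def by (rule riesz_dominated_double_gap[OF \<Omega> f])
    moreover have "2 * b - N < N - N / 2 ^ (n + 1)"
    proof -
      have "N / 2 ^ (n + 1) = 2 * (N / 2 ^ (n + 2))" by simp
      with b(2) show ?thesis by linarith
    qed
    ultimately show ?thesis
      using Suc.IH[of "2 * b - N"] \<open>N < 2 * b\<close> by (simp add: N_def)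
  qed
qed

lemma riesz_dominated_imp_L1_bound:
  fixes \<Omega> :: "'a::euclidean_space set" and a :: real
  assumes \<Omega>: "bounded \<Omega>" "\<Omega> \<in> sets lebesgue" and f: "f \<in> borel_measurable (lebesgue_on \<Omega>)"
    and a: "0 \<le> a" "a < DIM('a)" and "riesz_dominated \<Omega> a f"
  shows "\<exists>C\<ge>0. AE x0 in lebesgue_on \<Omega>. f x0 \<le> ennreal C * (\<integral>\<^sup>+x. f x \<partial>lebesgue_on \<Omega>)"
proof -
  define N where "N = real DIM('a)"
  obtain n :: nat where "N / (N - a) < 2 ^ n"
    using real_arch_pow[of 2 "N / (N - a)"] by auto
  then have "N / 2 ^ n < N - a"
    using a by (simp add: N_def divide_less_eq mult.commute)
  moreover have "N / 2 ^ (n + 1) \<le> N / 2 ^ n"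
    by (simp add: N_def divide_left_mono)
  ultimately have "a < N - N / 2 ^ (n + 1)" by linarith
  then show ?thesis
    unfolding N_def using riesz_dominated_imp_L1_bound_after_doublings[OF \<Omega> f] a assms(6) by blast
qed

section \<open>Bounds by the Green kernel\<close>

lemma AE_lebesgue_on_Times_imp_AE_AE:
  fixes S :: "'a::euclidean_space set" and T :: "'b::euclidean_space set"
  assumes S: "S \<in> sets borel" and T: "T \<in> sets borel"
    and AE: "AE p in lebesgue_on (S \<times> T). P (fst p) (snd p)"
  shows "AE y in lebesgue_on T. AE x in lebesgue_on S. P x y"
proof -
  have "S \<times> T \<in> sets borel"
    unfolding borel_prod[symmetric] using S T by simp
  then have "S \<times> T \<in> sets lebesgue" by simp
  then have "AE p in lborel. p \<in> S \<times> T \<longrightarrow> P (fst p) (snd p)"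
    using AE by (simp add: AE_restrict_space_iff AE_completion_iff)
  then have "AE p in lborel \<Otimes>\<^sub>M lborel. p \<in> S \<times> T \<longrightarrow> P (fst p) (snd p)"
    by (simp only: lborel_prod)
  then have "AE p in distr (lborel \<Otimes>\<^sub>M lborel) (lborel \<Otimes>\<^sub>M lborel) (\<lambda>(x, y). (y, x)).
      p \<in> S \<times> T \<longrightarrow> P (fst p) (snd p)"
    by (simp only: lborel_pair.distr_pair_swap[symmetric])
  from AE_distrD[OF measurable_pair_swap' this]
  have "AE q in lborel \<Otimes>\<^sub>M lborel. (snd q, fst q) \<in> S \<times> T \<longrightarrow> P (snd q) (fst q)"
    by (simp add: case_prod_beta)
  then have "AE y in lborel. AE x in lborel. (x, y) \<in> S \<times> T \<longrightarrow> P x y"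
    by (auto dest: lborel_pair.AE_pair)
  then have "AE y in lebesgue_on T. AE x in lborel. x \<in> S \<longrightarrow> P x y"
    using T by (intro AE_lebesgue_on_if_AE_lborel) (auto elim!: eventually_mono)
  then show ?thesis
    using S by (auto intro: AE_lebesgue_on_if_AE_lborel elim!: eventually_mono)
qed

lemma riesz_dominated_if_kernel_bound:
  fixes \<Omega> :: "'a::euclidean_space set" and G :: "'a \<Rightarrow> 'a \<Rightarrow> real" and u :: "'a \<Rightarrow> real"
  assumes \<Omega>: "\<Omega> \<in> sets borel"
    and G: "AE p in lebesgue_on (\<Omega> \<times> \<Omega>). G (fst p) (snd p) \<le> c * dist (fst p) (snd p) powr - a"
    and c: "0 \<le> c" and \<kappa>: "0 \<le> \<kappa>"
    and u: "u \<in> borel_measurable (lebesgue_on \<Omega>)" "AE x in lebesgue_on \<Omega>. 0 \<le> u x"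
    and ineq: "AE x0 in lebesgue_on \<Omega>.
      ennreal (u x0) \<le> ennreal \<kappa> * (\<integral>\<^sup>+x. ennreal (u x * G x x0) \<partial>lebesgue_on \<Omega>)"
  shows "riesz_dominated \<Omega> a (\<lambda>x. ennreal (u x))"
  unfolding riesz_dominated_def
proof (intro exI conjI)
  let ?M = "lebesgue_on \<Omega>"
  note [measurable] = u(1)
  show "0 \<le> \<kappa> * c" using c \<kappa> by simp
  show "AE x0 in ?M. ennreal (u x0) \<le> ennreal (\<kappa> * c) * (\<integral>\<^sup>+x. ennreal (u x) * riesz_kernel a x x0 \<partial>?M)"
    using ineq AE_lebesgue_on_Times_imp_AE_AE[OF \<Omega> \<Omega> G]
  proof eventually_elim
    case (elim x0)
    have pointwise: "ennreal (u x * G x x0) \<le> ennreal c * (ennreal (u x) * riesz_kernel a x x0)"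
      if "0 \<le> u x" "G x x0 \<le> c * dist x x0 powr - a" for x
    proof -
      have "u x * G x x0 \<le> c * (u x * dist x x0 powr - a)"
        using mult_left_mono[OF that(2,1)] by (simp add: mult.left_commute)
      then have "ennreal (u x * G x x0) \<le> ennreal (c * (u x * dist x x0 powr - a))"
        by (rule ennreal_leI)
      then show ?thesis
        using that(1) c by (simp add: riesz_kernel_def ennreal_mult')
    qed
    have "AE x in ?M. ennreal (u x * G x x0) \<le> ennreal c * (ennreal (u x) * riesz_kernel a x x0)"
      using elim(2) u(2) by eventually_elim (simp add: pointwise)
    then have "(\<integral>\<^sup>+x. ennreal (u x * G x x0) \<partial>?M) \<le> (\<integral>\<^sup>+x. ennreal c * (ennreal (u x) * riesz_kernel a x x0) \<partial>?M)"
      by (rule nn_integral_mono_AE)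
    also have "\<dots> = ennreal c * (\<integral>\<^sup>+x. ennreal (u x) * riesz_kernel a x x0 \<partial>?M)"
      by (rule nn_integral_cmult) measurable
    finally have "ennreal \<kappa> * (\<integral>\<^sup>+x. ennreal (u x * G x x0) \<partial>?M)
        \<le> ennreal \<kappa> * (ennreal c * (\<integral>\<^sup>+x. ennreal (u x) * riesz_kernel a x x0 \<partial>?M))"
      by (rule mult_left_mono) simp
    with elim(1) c \<kappa> show ?case by (simp add: ennreal_mult mult.assoc)
  qed
qed

lemma L1_bound_if_ennreal_bound:
  assumes u: "integrable M u" "AE x in M. 0 \<le> u x" and C: "0 \<le> C"
    and bound: "AE x in M. ennreal (u x) \<le> ennreal C * (\<integral>\<^sup>+x. ennreal (u x) \<partial>M)"
  shows "\<exists>\<kappa>>0. AE x in M. \<bar>u x\<bar> \<le> \<kappa> * (\<integral>x. \<bar>u x\<bar> \<partial>M)"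
proof (intro exI conjI)
  have "(\<integral>\<^sup>+x. ennreal (u x) \<partial>M) = (\<integral>\<^sup>+x. ennreal \<bar>u x\<bar> \<partial>M)"
    using u(2) by (intro nn_integral_cong_AE) (auto elim!: eventually_mono)
  also have "\<dots> = ennreal (\<integral>x. \<bar>u x\<bar> \<partial>M)"
    using u(1) by (intro nn_integral_eq_integral) auto
  finally have L1: "(\<integral>\<^sup>+x. ennreal (u x) \<partial>M) = ennreal (\<integral>x. \<bar>u x\<bar> \<partial>M)" .
  have I: "0 \<le> (\<integral>x. \<bar>u x\<bar> \<partial>M)" by simp
  show "0 < C + 1" using C by simp
  show "AE x in M. \<bar>u x\<bar> \<le> (C + 1) * (\<integral>x. \<bar>u x\<bar> \<partial>M)"
    using bound u(2)
  proof eventually_elim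
    case (elim x)
    then have "u x \<le> C * (\<integral>x. \<bar>u x\<bar> \<partial>M)"
      using C I by (simp add: L1 ennreal_mult[symmetric] ennreal_le_iff)
    also have "\<dots> \<le> (C + 1) * (\<integral>x. \<bar>u x\<bar> \<partial>M)"
      using I by (simp add: distrib_right)
    finally show ?case using elim(2) by simp
  qed
qed

theorem lemma5p2:
  fixes \<Omega> :: "'a::euclidean_space set"
    and D :: "('a \<Rightarrow> real) set"
    and L :: "('a \<Rightarrow> real) \<Rightarrow> ('a \<Rightarrow> real)"
    and G :: "'a \<Rightarrow> 'a \<Rightarrow> real"
    and u :: "'a \<Rightarrow> real"
    and \<kappa>0 :: real
  assumes "DIM('a) \<ge> 2"
    and "bounded_C11_domain \<Omega>"
    and "l1_linear_operator \<Omega> D L"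
    and "densely_defined \<Omega> D"
    and A1: "m_accretive_L1 \<Omega> D L"
    and A2: "submarkovian \<Omega> D L"
    and "green_left_inverse \<Omega> D L G"
    and K1: "\<exists>s c1. 0 < s \<and> s \<le> 1 \<and> 0 < c1 \<and> K1 \<Omega> G s c1"
    and "\<kappa>0 > 0"
    and "u \<in> borel_measurable (lebesgue_on \<Omega>)"
    and "integrable (lebesgue_on \<Omega>) (\<lambda>x. (u x)\<^sup>2)"
    and "AE x in lebesgue_on \<Omega>. 0 \<le> u x"
    and "AE x0 in lebesgue_on \<Omega>.
           ennreal (u x0) \<le> ennreal \<kappa>0 * (\<integral>\<^sup>+ x. ennreal (u x * G x x0) \<partial>lebesgue_on \<Omega>)"
  shows "\<exists>\<kappa>>0. AE x in lebesgue_on \<Omega>. \<bar>u x\<bar> \<le> \<kappa> * (\<integral>x. \<bar>u x\<bar> \<partial>lebesgue_on \<Omega>)"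
proof -
  have \<Omega>: "open \<Omega>" "bounded \<Omega>"
    using \<open>bounded_C11_domain \<Omega>\<close> by (auto simp: bounded_C11_domain_def)
  obtain s c1 where s: "0 < s" "s \<le> 1" and "0 < c1" and "K1 \<Omega> G s c1"
    using K1 by blast
  define \<alpha> where "\<alpha> = DIM('a) - 2 * s"
  have G: "AE p in lebesgue_on (\<Omega> \<times> \<Omega>). G (fst p) (snd p) \<le> c1 * dist (fst p) (snd p) powr - \<alpha>"
    using \<open>K1 \<Omega> G s c1\<close> unfolding K1_def \<alpha>_def by (auto elim: eventually_mono)
  have "riesz_dominated \<Omega> \<alpha> (\<lambda>x. ennreal (u x))"
    using \<Omega>(1) G \<open>0 < c1\<close> \<open>\<kappa>0 > 0\<close> assms(10,12,13) by (intro riesz_dominated_if_kernel_bound) auto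
  moreover have "0 \<le> \<alpha>" "\<alpha> < DIM('a)"
    using s \<open>DIM('a) \<ge> 2\<close> by (auto simp: \<alpha>_def)
  ultimately obtain C where "0 \<le> C"
    "AE x in lebesgue_on \<Omega>. ennreal (u x) \<le> ennreal C * (\<integral>\<^sup>+x. ennreal (u x) \<partial>lebesgue_on \<Omega>)"
    using riesz_dominated_imp_L1_bound[of \<Omega> "\<lambda>x. ennreal (u x)" \<alpha>] \<Omega> assms(10) by auto
  moreover have "integrable (lebesgue_on \<Omega>) u"
  proof -
    interpret finite_measure "lebesgue_on \<Omega>"
      using \<Omega> by (intro finite_measure_lebesgue_on bounded_set_imp_lmeasurable) auto
    show ?thesis using assms(10,11) by (rule square_integrable_imp_integrable)
  qed
  ultimately show ?thesis
    using assms(12) by (intro L1_bound_if_ennreal_bound) auto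
qed

end
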